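(* Consider the discrete setting described in the context, and let $\rho_\infty^*>0$ be defined from the initial datum as in the context. Assume there exist constants $0<\gamma_1<\rho_\infty^*$ and $\gamma_2>0$ such that for all $i\in\mathcal I$, $j\in\mathcal J$, $$(\rho_\infty^*-\gamma_1)\chi_{1,j}\le\mathfrak f^0_{ij}\le(\rho_\infty^*+\gamma_2)\chi_{1,j},\qquad(\rho_\infty^*+\gamma_2)^{-1}\chi_{2,j}\le\mathfrak g^0_{ij}\le(\rho_\infty^*-\gamma_1)^{-1}\chi_{2,j}.$$ Assume moreover that $\lambda=\Delta x/(2\Delta t)\ge v^*/2$. Then the nonlinear scheme admits a solution $(\mathfrak f^n_{ij},\mathfrak g^n_{ij})_{i\in\mathcal I,j\in\mathcal J,n\ge0}$ such that for all $i,j$ and $n\ge0$, $$(\rho_\infty^*-\gamma_1)\chi_{1,j}\le\mathfrak f^n_{ij}\le(\rho_\infty^*+\gamma_2)\chi_{1,j},\qquad(\rho_\infty^*+\gamma_2)^{-1}\chi_{2,j}\le\mathfrak g^n_{ij}\le(\rho_\infty^*-\gamma_1)^{-1}\chi_{2,j}.$$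
   Context: Space mesh: the torus $\mathbb T$ (length $|\mathbb T|$) split into $N$ uniform cells of length $\Delta x$, $i\in\mathcal I=\mathbb Z/N\mathbb Z$ (periodic). Velocity mesh: $v^*>0$, $\Delta v=v^*/L$, $j\in\mathcal J=\{-L+1,\dots,L\}$, midpoints $v_j=(j-\tfrac12)\Delta v$. Time step $\Delta t>0$; $\lambda=\Delta x/(2\Delta t)$ fixed. For $k=1,2$: $\chi_{k,j}>0$, $\chi_{k,j}=\chi_{k,1-j}$, $\sum_j\Delta v\chi_{k,j}=1$, $0<\underline D_k\le\sum_j\Delta v\,v_j^2\chi_{k,j}\le\overline D_k$, $\sum_j\Delta v\,v_j^4\chi_{k,j}\le\overline Q_k$. Given initial cell values $\mathfrak f^0_{ij},\mathfrak g^0_{ij}$, set $M_0=\sum_{i,j}\Delta x\Delta v(\mathfrak f^0_{ij}-\mathfrak g^0_{ij})$ and $\rho_\infty^*=\frac{M_0+\sqrt{M_0^2+4|\mathbb T|}}{2|\mathbb T|}$ (the unique positive solution of $M_0=|\mathbb T|(\rho_\infty^*-1/\rho_\infty^* )$). Nonlinear scheme: for $n\ge0$, $i\in\mathcal I$, $j\in\mathcal J$, $\frac{\mathfrak f^{n+1}_{ij}-\mathfrak f^n_{ij}}{\Delta t}+\frac{1}{\Delta x\Delta v}(\mathcal F^{n+1}_{i+\frac12,j}-\mathcal F^{n+1}_{i-\frac12,j})=\chi_{1,j}-\rho^{n+1}_{\mathfrak g,i}\mathfrak f^{n+1}_{ij}$, $\frac{\mathfrak g^{n+1}_{ij}-\mathfrak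 g^n_{ij}}{\Delta t}+\frac{1}{\Delta x\Delta v}(\mathcal G^{n+1}_{i+\frac12,j}-\mathcal G^{n+1}_{i-\frac12,j})=\chi_{2,j}-\rho^{n+1}_{\mathfrak f,i}\mathfrak g^{n+1}_{ij}$, with $\rho_{\mathfrak f,i}=\sum_j\Delta v\,\mathfrak f_{ij}$, $\rho_{\mathfrak g,i}=\sum_j\Delta v\,\mathfrak g_{ij}$, and Lax–Friedrichs fluxes $\mathcal F^{n+1}_{i+\frac12,j}=\Delta v\frac{v_j}{2}(\mathfrak f^{n+1}_{i+1,j}+\mathfrak f^{n+1}_{ij})-\Delta v\lambda(\mathfrak f^{n+1}_{i+1,j}-\mathfrak f^{n+1}_{ij})$, $\mathcal G$ likewise with $\mathfrak g$. *)

theory Defs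
  imports "HOL-Analysis.Analysis"
begin

definition vidx :: "nat \<Rightarrow> int set" where
  "vidx L = {- int L + 1 .. int L}"

definition vel :: "real \<Rightarrow> int \<Rightarrow> real" where
  "vel dv j = (real_of_int j - 1/2) * dv"

definition csucc :: "nat \<Rightarrow> nat \<Rightarrow> nat" where
  "csucc N i = (i + 1) mod N"

definition cpred :: "nat \<Rightarrow> nat \<Rightarrow> nat" where
  "cpred N i = (i + N - 1) mod N"

definition dens :: "nat \<Rightarrow> real \<Rightarrow> (nat \<Rightarrow> int \<Rightarrow> real) \<Rightarrow> nat \<Rightarrow> real" where
  "dens L dv h i = (\<Sum>j\<in>vidx L. dv * h i j)"

text \<open>Lax--Friedrichs flux at interface i+1/2.\<close>
definition lfflux :: "nat \<Rightarrow> real \<Rightarrow> real \<Rightarrow> (nat \<Rightarrow> int \<Rightarrow> real) \<Rightarrow> nat \<Rightarrow> int \<Rightarrow> real" where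
  "lfflux N dv lam h i j =
     dv * (vel dv j / 2) * (h (csucc N i) j + h i j) - dv * lam * (h (csucc N i) j - h i j)"

definition scheme_step ::
  "nat \<Rightarrow> nat \<Rightarrow> real \<Rightarrow> real \<Rightarrow> real \<Rightarrow> (int \<Rightarrow> real) \<Rightarrow> (int \<Rightarrow> real)
   \<Rightarrow> (nat \<Rightarrow> int \<Rightarrow> real) \<Rightarrow> (nat \<Rightarrow> int \<Rightarrow> real)
   \<Rightarrow> (nat \<Rightarrow> int \<Rightarrow> real) \<Rightarrow> (nat \<Rightarrow> int \<Rightarrow> real) \<Rightarrow> bool" where
  "scheme_step N L dx dv dt chi1 chi2 fo go fn gn \<longleftrightarrow>
     (\<forall>i<N. \<forall>j\<in>vidx L.
        (fn i j - fo i j) / dt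
          + (lfflux N dv (dx / (2 * dt)) fn i j - lfflux N dv (dx / (2 * dt)) fn (cpred N i) j) / (dx * dv)
          = chi1 j - dens L dv gn i * fn i j
      \<and> (gn i j - go i j) / dt
          + (lfflux N dv (dx / (2 * dt)) gn i j - lfflux N dv (dx / (2 * dt)) gn (cpred N i) j) / (dx * dv)
          = chi2 j - dens L dv fn i * gn i j)"

definition admissible_chi :: "nat \<Rightarrow> real \<Rightarrow> (int \<Rightarrow> real) \<Rightarrow> real \<Rightarrow> real \<Rightarrow> real \<Rightarrow> bool" where
  "admissible_chi L dv chi Dlo Dhi Q \<longleftrightarrow>
     (\<forall>j\<in>vidx L. chi j > 0) \<and> (\<forall>j\<in>vidx L. chi j = chi (1 - j))
     \<and> (\<Sum>j\<in>vidx L. dv * chi j) = 1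
     \<and> 0 < Dlo \<and> Dlo \<le> (\<Sum>j\<in>vidx L. dv * (vel dv j)^2 * chi j)
     \<and> (\<Sum>j\<in>vidx L. dv * (vel dv j)^2 * chi j) \<le> Dhi
     \<and> (\<Sum>j\<in>vidx L. dv * (vel dv j)^4 * chi j) \<le> Q"

end

theory Submission
  imports Defs
begin

text \<open>
  One implicit step is a fixed point of the map obtained by solving each cell equation for the
  unknown value in that cell.  Under the CFL condition dx/(2 dt) \<ge> v*/2 the two neighbours
  enter with nonnegative weights summing to one, so the map for f is increasing in f and
  decreasing in the density of g, and symmetrically for g.  On the box
  a \<chi>1 \<le> f \<le> c \<chi>1, \<chi>2/c \<le> g \<le> \<chi>2/a the densities satisfy
  a \<le> \<rho>(f) \<le> c and 1/c \<le> \<rho>(g) \<le> 1/a, which makes the box invariant.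
  Reversing the sign of g turns this competitive system into a monotone self-map of an order
  interval, whose fixed point is the supremum of its post-fixed points (Knaster-Tarski).  Only 0 < a \<le> c is needed: the value of
  \<rho>\<infinity>* plays no role in the invariance.
\<close>

lemma box_monotone_fixpoint:
  fixes T :: "('i \<Rightarrow> 'b::conditionally_complete_lattice) \<Rightarrow> 'i \<Rightarrow> 'b"
    and lo hi :: "'i \<Rightarrow> 'b" and I :: "'i set"
  defines "R \<equiv> {u. \<forall>k\<in>I. lo k \<le> u k \<and> u k \<le> hi k}"
  assumes lo_le_hi: "\<forall>k\<in>I. lo k \<le> hi k"
    and maps_box: "\<And>u. u \<in> R \<Longrightarrow> T u \<in> R"
    and mono: "\<And>u v. u \<in> R \<Longrightarrow> v \<in> R \<Longrightarrow> \<forall>k\<in>I. u k \<le> v k \<Longrightarrow> \<forall>k\<in>I. T u k \<le> T v k"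
  shows "\<exists>u\<in>R. \<forall>k\<in>I. T u k = u k"
proof -
  define S where "S = {u \<in> R. \<forall>k\<in>I. u k \<le> T u k}"
  define w where "w k = (SUP u\<in>S. u k)" for k
  have lo_S: "lo \<in> S"
  proof -
    have "lo \<in> R" using lo_le_hi by (simp add: R_def)
    with maps_box show ?thesis by (auto simp: S_def R_def)
  qed
  have bdd: "bdd_above ((\<lambda>u. u k) ` S)" if "k \<in> I" for k
    using that by (intro bdd_aboveI[of _ "hi k"]) (auto simp: S_def R_def)
  have le_w: "u k \<le> w k" if "u \<in> S" "k \<in> I" for u k
    unfolding w_def using that bdd by (intro cSup_upper) auto
  have w_le: "w k \<le> b" if "k \<in> I" "\<And>u. u \<in> S \<Longrightarrow> u k \<le> b" for k b
    unfolding w_def using lo_S that by (intro cSUP_least) auto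
  have w_box: "w \<in> R"
    using le_w[OF lo_S] w_le by (auto simp: R_def S_def)
  have w_le_Tw: "\<forall>k\<in>I. w k \<le> T w k"
  proof
    fix k assume k: "k \<in> I"
    have "u k \<le> T w k" if "u \<in> S" for u
    proof -
      have "\<forall>k\<in>I. T u k \<le> T w k" using that le_w w_box by (intro mono) (auto simp: S_def)
      then show ?thesis using that k by (force simp: S_def)
    qed
    then show "w k \<le> T w k" using k w_le by blast
  qed
  have "T w \<in> S"
    using maps_box[OF w_box] mono[OF w_box maps_box[OF w_box] w_le_Tw] by (simp add: S_def)
  then have "\<forall>k\<in>I. T w k = w k"
    using le_w w_le_Tw by (blast intro: antisym)
  with w_box show ?thesis by blast
qed

lemma competitive_box_fixpoint:
  fixes F G :: "('x \<Rightarrow> 'y \<Rightarrow> real) \<Rightarrow> ('x \<Rightarrow> 'y \<Rightarrow> real) \<Rightarrow> 'x \<Rightarrow> 'y \<Rightarrow> real"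
    and flo fhi glo ghi :: "'x \<Rightarrow> 'y \<Rightarrow> real" and A :: "'x set" and B :: "'y set"
  defines "in_box f g \<equiv> \<forall>i\<in>A. \<forall>j\<in>B.
             flo i j \<le> f i j \<and> f i j \<le> fhi i j \<and> glo i j \<le> g i j \<and> g i j \<le> ghi i j"
    and "below f1 g1 f2 g2 \<equiv> \<forall>i\<in>A. \<forall>j\<in>B. f1 i j \<le> f2 i j \<and> g2 i j \<le> g1 i j"
  assumes corner: "in_box flo ghi"
    and maps_box: "\<And>f g. in_box f g \<Longrightarrow> in_box (F f g) (G f g)"
    and mono: "\<And>f1 g1 f2 g2. in_box f1 g1 \<Longrightarrow> in_box f2 g2 \<Longrightarrow> below f1 g1 f2 g2 \<Longrightarrow>
                 below (F f1 g1) (G f1 g1) (F f2 g2) (G f2 g2)"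
  shows "\<exists>f g. in_box f g \<and> (\<forall>i\<in>A. \<forall>j\<in>B. F f g i j = f i j \<and> G f g i j = g i j)"
proof -
  define enc :: "('x \<Rightarrow> 'y \<Rightarrow> real) \<Rightarrow> ('x \<Rightarrow> 'y \<Rightarrow> real) \<Rightarrow> ('x \<times> 'y) + ('x \<times> 'y) \<Rightarrow> real"
    where "enc f g = case_sum (case_prod f) (\<lambda>(i, j). - g i j)" for f g
  define fpart where "fpart u i j = u (Inl (i, j))" for u :: "('x \<times> 'y) + ('x \<times> 'y) \<Rightarrow> real" and i j
  define gpart where "gpart u i j = - u (Inr (i, j))" for u :: "('x \<times> 'y) + ('x \<times> 'y) \<Rightarrow> real" and i j
  define I where "I = Inl ` (A \<times> B) \<union> Inr ` (A \<times> B)"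
  have ball_I: "(\<forall>k\<in>I. P k) \<longleftrightarrow> (\<forall>i\<in>A. \<forall>j\<in>B. P (Inl (i, j)) \<and> P (Inr (i, j)))" for P
    by (auto simp: I_def)
  have parts_enc [simp]: "fpart (enc f g) = f" "gpart (enc f g) = g" for f g
    by (simp_all add: fun_eq_iff fpart_def gpart_def enc_def)
  have le_iff: "(\<forall>k\<in>I. u k \<le> v k) \<longleftrightarrow> below (fpart u) (gpart u) (fpart v) (gpart v)" for u v
    by (auto simp: ball_I below_def fpart_def gpart_def)
  have box_iff: "u \<in> {u. \<forall>k\<in>I. enc flo ghi k \<le> u k \<and> u k \<le> enc fhi glo k}
      \<longleftrightarrow> in_box (fpart u) (gpart u)" for u
    by (simp add: ball_I in_box_def enc_def fpart_def gpart_def minus_le_iff le_minus_iff conj_ac)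
  define T where "T u = enc (F (fpart u) (gpart u)) (G (fpart u) (gpart u))" for u
  have "\<exists>u \<in> {u. \<forall>k\<in>I. enc flo ghi k \<le> u k \<and> u k \<le> enc fhi glo k}. \<forall>k\<in>I. T u k = u k"
  proof (rule box_monotone_fixpoint)
    show "\<forall>k\<in>I. enc flo ghi k \<le> enc fhi glo k"
      using corner box_iff[of "enc flo ghi"] by simp
  qed (simp_all only: box_iff le_iff, auto simp: T_def intro: maps_box mono)
  then obtain u where "in_box (fpart u) (gpart u)" "\<forall>k\<in>I. T u k = u k"
    using box_iff by blast
  then have "\<forall>i\<in>A. \<forall>j\<in>B. F (fpart u) (gpart u) i j = fpart u i j \<and> G (fpart u) (gpart u) i j = gpart u i j"
    by (auto simp: T_def ball_I fpart_def gpart_def enc_def minus_equation_iff)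
  with \<open>in_box (fpart u) (gpart u)\<close> show ?thesis
    by blast
qed

lemma csucc_cpred:
  assumes "i < N"
  shows "csucc N (cpred N i) = i"
proof -
  have "csucc N (cpred N i) = (i + N - 1 + 1) mod N"
    by (simp add: csucc_def cpred_def mod_Suc_eq)
  also have "\<dots> = i"
    using assms by simp
  finally show ?thesis .
qed

locale lf_mesh =
  fixes N L :: nat and dx dv dt :: real
  assumes N_pos: "0 < N" and dx_pos: "0 < dx" and dv_pos: "0 < dv" and dt_pos: "0 < dt"
    and cfl: "real L * dv / 2 \<le> dx / (2 * dt)"
begin

abbreviation lam :: real where "lam \<equiv> dx / (2 * dt)"

definition weight_next :: "int \<Rightarrow> real" where
  "weight_next j = (lam - vel dv j / 2) / (2 * lam)"

definition weight_prev :: "int \<Rightarrow> real" where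
  "weight_prev j = (lam + vel dv j / 2) / (2 * lam)"

lemma lam_pos: "0 < lam"
  using dx_pos dt_pos by simp

lemma abs_vel_le:
  assumes "j \<in> vidx L"
  shows "\<bar>vel dv j\<bar> \<le> 2 * lam"
proof -
  have "\<bar>real_of_int j - 1/2\<bar> \<le> real L"
    using assms by (auto simp: vidx_def)
  then have "\<bar>vel dv j\<bar> \<le> real L * dv"
    using dv_pos by (simp add: vel_def abs_mult)
  then show ?thesis
    using cfl by simp
qed

lemma weight_next_nonneg: "j \<in> vidx L \<Longrightarrow> 0 \<le> weight_next j"
  unfolding weight_next_def using abs_vel_le[of j] lam_pos
  by (intro divide_nonneg_pos) (auto simp: abs_le_iff)

lemma weight_prev_nonneg: "j \<in> vidx L \<Longrightarrow> 0 \<le> weight_prev j"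
  unfolding weight_prev_def using abs_vel_le[of j] lam_pos
  by (intro divide_nonneg_pos) (auto simp: abs_le_iff)

lemma weight_next_plus_prev: "weight_next j + weight_prev j = 1"
  using dx_pos dt_pos by (simp add: weight_next_def weight_prev_def field_simps)

definition update ::
  "(int \<Rightarrow> real) \<Rightarrow> (nat \<Rightarrow> int \<Rightarrow> real) \<Rightarrow> (nat \<Rightarrow> int \<Rightarrow> real) \<Rightarrow> (nat \<Rightarrow> int \<Rightarrow> real)
    \<Rightarrow> nat \<Rightarrow> int \<Rightarrow> real" where
  "update chi ho h other i j =
     (ho i j + dt * chi j + weight_next j * h (csucc N i) j + weight_prev j * h (cpred N i) j)
       / (2 + dt * dens L dv other i)"

lemma scheme_equation_if_update_fixed:
  assumes "i < N" and pos: "0 < 2 + dt * dens L dv other i"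
    and fixed: "update chi ho h other i j = h i j"
  shows "(h i j - ho i j) / dt + (lfflux N dv lam h i j - lfflux N dv lam h (cpred N i) j) / (dx * dv)
           = chi j - dens L dv other i * h i j"
proof -
  let ?rho = "dens L dv other i"
  let ?nb = "weight_next j * h (csucc N i) j + weight_prev j * h (cpred N i) j"
  have balance: "h i j * (2 + dt * ?rho) = ho i j + dt * chi j + ?nb"
    using fixed pos by (simp add: update_def divide_eq_eq)
  have "lfflux N dv lam h i j - lfflux N dv lam h (cpred N i) j = (dx * dv) * ((h i j - ?nb) / dt)"
    using dx_pos dt_pos
    by (simp add: lfflux_def csucc_cpred[OF \<open>i < N\<close>] weight_next_def weight_prev_def field_simps)
  then have "(h i j - ho i j) / dt + (lfflux N dv lam h i j - lfflux N dv lam h (cpred N i) j) / (dx * dv)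
      = (h i j - ho i j) / dt + (h i j - ?nb) / dt"
    using dx_pos dv_pos by simp
  also have "\<dots> = (h i j - ho i j + (h i j - ?nb)) / dt"
    by (rule add_divide_distrib[symmetric])
  also have "\<dots> = chi j - ?rho * h i j"
    using balance dt_pos by (simp add: field_simps)
  finally show ?thesis .
qed

definition species_box :: "real \<Rightarrow> real \<Rightarrow> (int \<Rightarrow> real) \<Rightarrow> (nat \<Rightarrow> int \<Rightarrow> real) \<Rightarrow> bool" where
  "species_box lo hi chi h \<longleftrightarrow> (\<forall>i<N. \<forall>j\<in>vidx L. lo * chi j \<le> h i j \<and> h i j \<le> hi * chi j)"

lemma dens_mono:
  assumes "\<forall>j\<in>vidx L. h1 i j \<le> h2 i j"
  shows "dens L dv h1 i \<le> dens L dv h2 i"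
  unfolding dens_def using assms dv_pos by (intro sum_mono mult_left_mono) auto

lemma dens_scaled_profile:
  assumes "(\<Sum>j\<in>vidx L. dv * chi j) = 1"
  shows "dens L dv (\<lambda>_ j. s * chi j) i = s"
  using assms by (simp add: dens_def sum_distrib_left[symmetric] mult.left_commute)

lemma dens_species_box:
  assumes "species_box lo hi chi h" "(\<Sum>j\<in>vidx L. dv * chi j) = 1" "i < N"
  shows "lo \<le> dens L dv h i" "dens L dv h i \<le> hi"
proof -
  show "lo \<le> dens L dv h i"
    using dens_mono[of "\<lambda>_ j. lo * chi j" i h] assms
    by (simp add: dens_scaled_profile species_box_def)
  show "dens L dv h i \<le> hi"
    using dens_mono[of h i "\<lambda>_ j. hi * chi j"] assms
    by (simp add: dens_scaled_profile species_box_def)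
qed

lemma neighbours_lt:
  assumes "i < N"
  shows "csucc N i < N" "cpred N i < N"
  using N_pos by (simp_all add: csucc_def cpred_def)

lemma species_box_nonneg:
  assumes "species_box lo hi chi h" "0 \<le> lo" "\<forall>j\<in>vidx L. 0 < chi j" "i < N" "j \<in> vidx L"
  shows "0 \<le> h i j"
proof -
  have "0 < chi j"
    using assms(3,5) by blast
  then have "0 \<le> lo * chi j"
    using assms(2) by simp
  also have "\<dots> \<le> h i j"
    using assms(1,4,5) by (simp add: species_box_def)
  finally show ?thesis .
qed

lemma update_species_box:
  assumes chi: "\<forall>j\<in>vidx L. 0 < chi j" and lo: "0 < lo" "lo \<le> hi"
    and ho: "species_box lo hi chi ho" and h: "species_box lo hi chi h"
    and other: "\<forall>i<N. 1 / hi \<le> dens L dv other i \<and> dens L dv other i \<le> 1 / lo"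
  shows "species_box lo hi chi (update chi ho h other)"
  unfolding species_box_def
proof (intro allI impI ballI conjI)
  fix i j assume i: "i < N" and j: "j \<in> vidx L"
  let ?rho = "dens L dv other i"
  let ?num = "ho i j + dt * chi j + (weight_next j * h (csucc N i) j + weight_prev j * h (cpred N i) j)"
  have chi_j: "0 < chi j" and hi: "0 < hi"
    using chi j lo by auto
  have dt_chi: "0 < dt * chi j"
    using dt_pos chi_j by simp
  have rho: "1 \<le> hi * ?rho" "lo * ?rho \<le> 1"
    using other i lo hi by (auto simp: field_simps)
  have "0 < ?rho"
    using zero_less_mult_pos[of hi ?rho] rho(1) hi by linarith
  then have denom: "0 < 2 + dt * ?rho"
    using dt_pos by (simp add: add_pos_pos)
  have hs: "lo * chi j \<le> h (csucc N i) j" "h (csucc N i) j \<le> hi * chi j"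
    and hp: "lo * chi j \<le> h (cpred N i) j" "h (cpred N i) j \<le> hi * chi j"
    and hoij: "lo * chi j \<le> ho i j" "ho i j \<le> hi * chi j"
    using h ho i j neighbours_lt[OF i] by (auto simp: species_box_def)
  have convex: "(weight_next j + weight_prev j) * x = x" for x
    by (simp add: weight_next_plus_prev)
  have "weight_next j * (lo * chi j) + weight_prev j * (lo * chi j)
      \<le> weight_next j * h (csucc N i) j + weight_prev j * h (cpred N i) j"
    using hs hp weight_next_nonneg[OF j] weight_prev_nonneg[OF j] by (intro add_mono mult_left_mono) auto
  moreover have "dt * chi j * (lo * ?rho) \<le> dt * chi j"
    using rho dt_chi by (simp add: mult_le_cancel_left2)
  ultimately have "lo * chi j * (2 + dt * ?rho) \<le> ?num"
    using hoij convex[of "lo * chi j"] by (simp add: algebra_simps)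
  then show "lo * chi j \<le> update chi ho h other i j"
    using denom by (simp add: update_def pos_le_divide_eq add.assoc)
  have "weight_next j * h (csucc N i) j + weight_prev j * h (cpred N i) j
      \<le> weight_next j * (hi * chi j) + weight_prev j * (hi * chi j)"
    using hs hp weight_next_nonneg[OF j] weight_prev_nonneg[OF j] by (intro add_mono mult_left_mono) auto
  moreover have "dt * chi j \<le> dt * chi j * (hi * ?rho)"
    using rho dt_chi by (simp add: mult_le_cancel_left1)
  ultimately have "?num \<le> hi * chi j * (2 + dt * ?rho)"
    using hoij convex[of "hi * chi j"] by (simp add: algebra_simps)
  then show "update chi ho h other i j \<le> hi * chi j"
    using denom by (simp add: update_def pos_divide_le_eq add.assoc)
qed

lemma update_mono:
  assumes chi: "\<forall>j\<in>vidx L. 0 \<le> chi j" and ho: "\<forall>i<N. \<forall>j\<in>vidx L. 0 \<le> ho i j"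
    and h1: "\<forall>i<N. \<forall>j\<in>vidx L. 0 \<le> h1 i j" and le: "\<forall>i<N. \<forall>j\<in>vidx L. h1 i j \<le> h2 i j"
    and other: "\<forall>i<N. 0 \<le> dens L dv other2 i \<and> dens L dv other2 i \<le> dens L dv other1 i"
  shows "\<forall>i<N. \<forall>j\<in>vidx L. update chi ho h1 other1 i j \<le> update chi ho h2 other2 i j"
proof (intro allI impI ballI)
  fix i j assume i: "i < N" and j: "j \<in> vidx L"
  note nb = neighbours_lt[OF i]
  show "update chi ho h1 other1 i j \<le> update chi ho h2 other2 i j"
    unfolding update_def
  proof (rule frac_le)
    have "0 \<le> h2 (csucc N i) j" "0 \<le> h2 (cpred N i) j"
      using h1 le nb j by (meson order_trans)+
    then show "0 \<le> ho i j + dt * chi j + weight_next j * h2 (csucc N i) j + weight_prev j * h2 (cpred N i) j"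
      using ho chi i j dt_pos weight_next_nonneg[OF j] weight_prev_nonneg[OF j] by simp
    show "ho i j + dt * chi j + weight_next j * h1 (csucc N i) j + weight_prev j * h1 (cpred N i) j
        \<le> ho i j + dt * chi j + weight_next j * h2 (csucc N i) j + weight_prev j * h2 (cpred N i) j"
      using le nb j dt_pos weight_next_nonneg[OF j] weight_prev_nonneg[OF j]
      by (intro add_mono mult_left_mono) auto
    show "0 < 2 + dt * dens L dv other2 i"
      using other i dt_pos by (simp add: add_pos_nonneg)
    show "2 + dt * dens L dv other2 i \<le> 2 + dt * dens L dv other1 i"
      using other i dt_pos by simp
  qed
qed

end

locale lf_data = lf_mesh +
  fixes chi1 chi2 :: "int \<Rightarrow> real" and a c :: real
  assumes chi1_pos: "\<forall>j\<in>vidx L. 0 < chi1 j" and chi1_mass: "(\<Sum>j\<in>vidx L. dv * chi1 j) = 1"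
    and chi2_pos: "\<forall>j\<in>vidx L. 0 < chi2 j" and chi2_mass: "(\<Sum>j\<in>vidx L. dv * chi2 j) = 1"
    and a_pos: "0 < a" and a_le_c: "a \<le> c"
begin

definition state_box :: "(nat \<Rightarrow> int \<Rightarrow> real) \<Rightarrow> (nat \<Rightarrow> int \<Rightarrow> real) \<Rightarrow> bool" where
  "state_box f g \<longleftrightarrow> species_box a c chi1 f \<and> species_box (1 / c) (1 / a) chi2 g"

lemma state_box_iff:
  "state_box f g \<longleftrightarrow> (\<forall>i\<in>{..<N}. \<forall>j\<in>vidx L. a * chi1 j \<le> f i j \<and> f i j \<le> c * chi1 j
                                        \<and> chi2 j / c \<le> g i j \<and> g i j \<le> chi2 j / a)"
  by (auto simp: state_box_def species_box_def)

lemma dens_state_box: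
  assumes "state_box f g" "i < N"
  shows "a \<le> dens L dv f i" "dens L dv f i \<le> c" "1 / c \<le> dens L dv g i" "dens L dv g i \<le> 1 / a"
  using dens_species_box[OF _ chi1_mass, of a c f i] dens_species_box[OF _ chi2_mass, of "1 / c" "1 / a" g i]
    assms by (simp_all add: state_box_def)

lemma dens_pos_state_box:
  assumes "state_box f g" "i < N"
  shows "0 < dens L dv f i" "0 < dens L dv g i"
  using dens_state_box[OF assms] a_pos a_le_c by (auto intro: less_le_trans[of 0 "1 / c"])

lemma state_box_nonneg:
  assumes "state_box f g" "i < N" "j \<in> vidx L"
  shows "0 \<le> f i j" "0 \<le> g i j"
  using species_box_nonneg[OF _ _ chi1_pos assms(2,3), of a c f]
    species_box_nonneg[OF _ _ chi2_pos assms(2,3), of "1 / c" "1 / a" g] assms(1) a_pos a_le_c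
  by (simp_all add: state_box_def)

lemma update_state_box:
  assumes "state_box fo go" "state_box f g"
  shows "state_box (update chi1 fo f g) (update chi2 go g f)"
proof -
  have "species_box a c chi1 (update chi1 fo f g)"
    using update_species_box[OF chi1_pos a_pos a_le_c] dens_state_box[OF assms(2)] assms
    by (simp add: state_box_def)
  moreover have "species_box (1 / c) (1 / a) chi2 (update chi2 go g f)"
    using update_species_box[OF chi2_pos, of "1 / c" "1 / a"] dens_state_box[OF assms(2)] assms
      a_pos a_le_c
    by (simp add: state_box_def frac_le)
  ultimately show ?thesis
    by (simp add: state_box_def)
qed

lemma update_state_mono:
  assumes old: "state_box fo go" and box1: "state_box f1 g1" and box2: "state_box f2 g2"
    and le: "\<forall>i<N. \<forall>j\<in>vidx L. f1 i j \<le> f2 i j \<and> g2 i j \<le> g1 i j"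
  shows "\<forall>i<N. \<forall>j\<in>vidx L. update chi1 fo f1 g1 i j \<le> update chi1 fo f2 g2 i j
                          \<and> update chi2 go g2 f2 i j \<le> update chi2 go g1 f1 i j"
proof -
  have "\<forall>i<N. \<forall>j\<in>vidx L. update chi1 fo f1 g1 i j \<le> update chi1 fo f2 g2 i j"
  proof (rule update_mono)
    show "\<forall>i<N. 0 \<le> dens L dv g2 i \<and> dens L dv g2 i \<le> dens L dv g1 i"
      using le dens_pos_state_box[OF box2] by (auto intro!: dens_mono simp: less_imp_le)
  qed (use chi1_pos le state_box_nonneg[OF old] state_box_nonneg[OF box1] in auto)
  moreover have "\<forall>i<N. \<forall>j\<in>vidx L. update chi2 go g2 f2 i j \<le> update chi2 go g1 f1 i j"
  proof (rule update_mono)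
    show "\<forall>i<N. 0 \<le> dens L dv f1 i \<and> dens L dv f1 i \<le> dens L dv f2 i"
      using le dens_pos_state_box[OF box1] by (auto intro!: dens_mono simp: less_imp_le)
  qed (use chi2_pos le state_box_nonneg[OF old] state_box_nonneg[OF box2] in auto)
  ultimately show ?thesis
    by blast
qed

lemma lf_step_exists:
  assumes old: "state_box fo go"
  shows "\<exists>fn gn. state_box fn gn \<and> scheme_step N L dx dv dt chi1 chi2 fo go fn gn"
proof -
  have "\<exists>f g. (\<forall>i\<in>{..<N}. \<forall>j\<in>vidx L. a * chi1 j \<le> f i j \<and> f i j \<le> c * chi1 j
                     \<and> chi2 j / c \<le> g i j \<and> g i j \<le> chi2 j / a)
      \<and> (\<forall>i\<in>{..<N}. \<forall>j\<in>vidx L. update chi1 fo f g i j = f i j \<and> update chi2 go g f i j = g i j)"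
  proof (rule competitive_box_fixpoint[where F = "\<lambda>f g. update chi1 fo f g" and G = "\<lambda>f g. update chi2 go g f"])
    show "\<forall>i\<in>{..<N}. \<forall>j\<in>vidx L. a * chi1 j \<le> a * chi1 j \<and> a * chi1 j \<le> c * chi1 j
            \<and> chi2 j / c \<le> chi2 j / a \<and> chi2 j / a \<le> chi2 j / a"
      using chi1_pos chi2_pos a_pos a_le_c by (auto intro!: divide_left_mono)
  qed (simp_all only: state_box_iff[symmetric] lessThan_iff,
       simp_all add: update_state_box[OF old] update_state_mono[OF old])
  then obtain fn gn where box: "state_box fn gn"
    and fixed: "\<forall>i<N. \<forall>j\<in>vidx L. update chi1 fo fn gn i j = fn i j \<and> update chi2 go gn fn i j = gn i j"
    unfolding state_box_iff by auto
  have "scheme_step N L dx dv dt chi1 chi2 fo go fn gn"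
    unfolding scheme_step_def
    using fixed dens_pos_state_box[OF box] dt_pos
    by (auto intro!: scheme_equation_if_update_fixed add_pos_pos)
  with box show ?thesis
    by blast
qed

lemma lf_solution_exists:
  assumes "state_box f0 g0"
  shows "\<exists>f g. f 0 = f0 \<and> g 0 = g0
           \<and> (\<forall>n. scheme_step N L dx dv dt chi1 chi2 (f n) (g n) (f (Suc n)) (g (Suc n)))
           \<and> (\<forall>n. state_box (f n) (g n))"
proof -
  let ?P = "\<lambda>n x. state_box (fst x) (snd x) \<and> (n = 0 \<longrightarrow> x = (f0, g0))"
  let ?Q = "\<lambda>n x y. scheme_step N L dx dv dt chi1 chi2 (fst x) (snd x) (fst y) (snd y)"
  have "\<exists>s. \<forall>n. ?P n (s n) \<and> ?Q n (s n) (s (Suc n))"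
  proof (rule dependent_nat_choice)
    show "\<exists>x. ?P 0 x"
      using assms by auto
    show "\<exists>y. ?P (Suc n) y \<and> ?Q n x y" if "?P n x" for x n
      using that lf_step_exists by force
  qed
  then obtain s where s: "\<forall>n. ?P n (s n) \<and> ?Q n (s n) (s (Suc n))"
    by blast
  show ?thesis
  proof (intro exI conjI)
    show "fst (s 0) = f0" "snd (s 0) = g0"
      using s by auto
  qed (use s in auto)
qed

end

theorem theorem5p1:
  fixes N L :: nat and Tlen vstar dx dv dt :: real
    and chi1 chi2 :: "int \<Rightarrow> real"
    and D1lo D1hi Q1 D2lo D2hi Q2 :: real
    and f0 g0 :: "nat \<Rightarrow> int \<Rightarrow> real"
    and gamma1 gamma2 :: real
  assumes hT: "Tlen > 0" and hN: "N > 0" and hL: "L > 0" and hv: "vstar > 0"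
    and hdx: "dx = Tlen / real N" and hdv: "dv = vstar / real L" and hdt: "dt > 0"
    and hchi1: "admissible_chi L dv chi1 D1lo D1hi Q1"
    and hchi2: "admissible_chi L dv chi2 D2lo D2hi Q2"
    and hg1: "0 < gamma1"
    and hg1': "gamma1 < (let M0 = (\<Sum>i<N. \<Sum>j\<in>vidx L. dx * dv * (f0 i j - g0 i j))
                          in (M0 + sqrt (M0^2 + 4 * Tlen)) / (2 * Tlen))"
    and hg2: "0 < gamma2"
    and hinit: "let M0 = (\<Sum>i<N. \<Sum>j\<in>vidx L. dx * dv * (f0 i j - g0 i j));
                    r = (M0 + sqrt (M0^2 + 4 * Tlen)) / (2 * Tlen)
                in \<forall>i<N. \<forall>j\<in>vidx L.
                     (r - gamma1) * chi1 j \<le> f0 i j \<and> f0 i j \<le> (r + gamma2) * chi1 j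
                   \<and> chi2 j / (r + gamma2) \<le> g0 i j \<and> g0 i j \<le> chi2 j / (r - gamma1)"
    and hlam: "dx / (2 * dt) \<ge> vstar / 2"
  shows "let M0 = (\<Sum>i<N. \<Sum>j\<in>vidx L. dx * dv * (f0 i j - g0 i j));
             r = (M0 + sqrt (M0^2 + 4 * Tlen)) / (2 * Tlen)
         in \<exists>f g :: nat \<Rightarrow> nat \<Rightarrow> int \<Rightarrow> real.
              (\<forall>i<N. \<forall>j\<in>vidx L. f 0 i j = f0 i j \<and> g 0 i j = g0 i j)
            \<and> (\<forall>n. scheme_step N L dx dv dt chi1 chi2 (f n) (g n) (f (Suc n)) (g (Suc n)))
            \<and> (\<forall>n. \<forall>i<N. \<forall>j\<in>vidx L.
                 (r - gamma1) * chi1 j \<le> f n i j \<and> f n i j \<le> (r + gamma2) * chi1 j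
               \<and> chi2 j / (r + gamma2) \<le> g n i j \<and> g n i j \<le> chi2 j / (r - gamma1))"
proof -
  define M0 where "M0 = (\<Sum>i<N. \<Sum>j\<in>vidx L. dx * dv * (f0 i j - g0 i j))"
  define r where "r = (M0 + sqrt (M0^2 + 4 * Tlen)) / (2 * Tlen)"
  have dv: "0 < dv" and Ldv: "real L * dv = vstar"
    using hv hL hdv by simp_all
  have chi: "\<forall>j\<in>vidx L. 0 < chi1 j" "(\<Sum>j\<in>vidx L. dv * chi1 j) = 1"
    "\<forall>j\<in>vidx L. 0 < chi2 j" "(\<Sum>j\<in>vidx L. dv * chi2 j) = 1"
    using hchi1 hchi2 unfolding admissible_chi_def by blast+
  have "0 < r - gamma1"
    using hg1' unfolding M0_def r_def Let_def by simp
  then interpret lf_data N L dx dv dt chi1 chi2 "r - gamma1" "r + gamma2"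
    using hN hT hdx dv hdt hlam Ldv chi hg1 hg2 by unfold_locales simp_all
  have "state_box f0 g0"
    using hinit unfolding M0_def[symmetric] r_def[symmetric] Let_def state_box_iff by simp
  from lf_solution_exists[OF this] obtain f g
    where init: "f 0 = f0" "g 0 = g0"
      and steps: "\<forall>n. scheme_step N L dx dv dt chi1 chi2 (f n) (g n) (f (Suc n)) (g (Suc n))"
      and bounds: "\<forall>n. state_box (f n) (g n)"
    by blast
  show ?thesis
    unfolding M0_def[symmetric] r_def[symmetric] Let_def
  proof (intro exI conjI)
    show "\<forall>i<N. \<forall>j\<in>vidx L. f 0 i j = f0 i j \<and> g 0 i j = g0 i j"
      using init by simp
  qed (use steps bounds in \<open>auto simp: state_box_iff\<close>)
qed

end
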